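(* Let $w \in S_n$ with Lehmer code $L(w) = (L_1,\dots,L_n)$. Then $w$ avoids the patterns $1432$ and $312$ if and only if $L(w)$ satisfies all three of the following rules: (1) $L_i - L_{i+1} \le 1$ for all $1 \le i < n$; (2) $L_i - L_{i+1} \ge -1$ for all $1 \le i < n$; (3) whenever $i < j$ with $L_i < L_{i+1}$ and $L_j < L_{j+1}$, there is some $k$ with $i < k < j$ such that $L_k > L_{k+1}$.
   Context: The Lehmer code of $w \in S_n$ is $L(w) = (L_1,\dots,L_n)$ with $L_i = |\{j > i : w(j) < w(i)\}|$. A permutation $w$ contains a pattern $p \in S_k$ if there are indices $i_1 < \dots < i_k$ with $w(i_1),\dots,w(i_k)$ in the same relative order as $p(1),\dots,p(k)$; otherwise it avoids $p$. *)

theory Defs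
  imports "HOL-Combinatorics.Permutations"
begin

text \<open>A permutation w of S_n is a function w :: nat => nat with w permutes {1..n}
  (one-line notation w(1),...,w(n)).\<close>

definition lehmer :: "nat \<Rightarrow> (nat \<Rightarrow> nat) \<Rightarrow> nat \<Rightarrow> nat" where
  "lehmer n w i = card {j. i < j \<and> j \<le> n \<and> w j < w i}"

text \<open>A pattern p in S_k is given in one-line notation as the list [p(1),...,p(k)].
  w contains p if there are indices i_1 < ... < i_k in {1..n} with
  w(i_1),...,w(i_k) in the same relative order as p(1),...,p(k).\<close>

definition contains :: "nat \<Rightarrow> (nat \<Rightarrow> nat) \<Rightarrow> nat list \<Rightarrow> bool" where
  "contains n w p \<longleftrightarrow> (\<exists>f :: nat \<Rightarrow> nat.
      (\<forall>a b. 1 \<le> a \<longrightarrow> a < b \<longrightarrow> b \<le> length p \<longrightarrow> f a < f b) \<and>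
      (\<forall>a. 1 \<le> a \<longrightarrow> a \<le> length p \<longrightarrow> 1 \<le> f a \<and> f a \<le> n) \<and>
      (\<forall>a b. 1 \<le> a \<longrightarrow> a \<le> length p \<longrightarrow> 1 \<le> b \<longrightarrow> b \<le> length p \<longrightarrow>
          (w (f a) < w (f b) \<longleftrightarrow> p ! (a - 1) < p ! (b - 1))))"

definition avoids :: "nat \<Rightarrow> (nat \<Rightarrow> nat) \<Rightarrow> nat list \<Rightarrow> bool" where
  "avoids n w p \<longleftrightarrow> \<not> contains n w p"

end

(*
  Comparing L i with L (i+1): position i+1 counts for L i exactly when i is a descent, and a
  later position j counts for exactly one of them iff w j lies strictly between w i and w (i+1).
  So L i - L (i+1) is 1 plus the number of such j at a descent, and minus that number at an
  ascent. Rule (1) then says that no descent has such a j, which is 312-avoidance. Rule (2) says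
  that no ascent has two of them, and rule (3) that two ascents having one are separated by a
  descent; in the presence of (1) these are equivalent to 1432-avoidance, the converse
  direction by looking at a 1432 occurrence whose first two entries are closest.
*)
theory Submission
  imports Defs
begin

lemma ex_Suc_crossing:
  fixes P :: "nat \<Rightarrow> bool"
  assumes "m \<le> n" "P m" "\<not> P n"
  shows "\<exists>k. m \<le> k \<and> k < n \<and> P k \<and> \<not> P (Suc k)"
proof -
  obtain k where "k < n - m" "\<forall>i\<le>k. P (m + i)" "\<not> P (m + Suc k)"
    using ex_least_nat_less[of "\<lambda>k. \<not> P (m + k)" "n - m"] assms by auto
  then show ?thesis by (intro exI[of _ "m + k"]) auto
qed

lemma contains_iff_indices:
  "contains n w p \<longleftrightarrow> (\<exists>is. length is = length p \<and> sorted_wrt (<) is \<and> set is \<subseteq> {1..n} \<and>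
      (\<forall>a < length p. \<forall>b < length p. w (is ! a) < w (is ! b) \<longleftrightarrow> p ! a < p ! b))"
  (is "_ \<longleftrightarrow> (\<exists>is. ?indices is)")
proof
  assume "contains n w p"
  then obtain f where mono: "\<And>a b. 1 \<le> a \<Longrightarrow> a < b \<Longrightarrow> b \<le> length p \<Longrightarrow> f a < f b"
    and range: "\<And>a. 1 \<le> a \<Longrightarrow> a \<le> length p \<Longrightarrow> 1 \<le> f a \<and> f a \<le> n"
    and order: "\<And>a b. 1 \<le> a \<Longrightarrow> a \<le> length p \<Longrightarrow> 1 \<le> b \<Longrightarrow> b \<le> length p \<Longrightarrow>
          w (f a) < w (f b) \<longleftrightarrow> p ! (a - 1) < p ! (b - 1)"
    unfolding contains_def by blast
  let ?is = "map (\<lambda>a. f (Suc a)) [0..<length p]"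
  have "?indices ?is"
  proof (intro conjI allI impI)
    show "sorted_wrt (<) ?is" unfolding sorted_wrt_iff_nth_less
    proof (intro allI impI)
      fix i j assume "i < j" "j < length ?is"
      then show "?is ! i < ?is ! j" using mono[of "Suc i" "Suc j"] by simp
    qed
    show "set ?is \<subseteq> {1..n}" using range by (auto simp: Suc_le_eq)
    show "w (?is ! a) < w (?is ! b) \<longleftrightarrow> p ! a < p ! b" if "a < length p" "b < length p" for a b
      using order[of "Suc a" "Suc b"] that by simp
  qed simp
  then show "\<exists>is. ?indices is" by blast
next
  assume "\<exists>is. ?indices is"
  then obtain "is" where len: "length is = length p" and sorted: "sorted_wrt (<) is"
    and range: "set is \<subseteq> {1..n}"
    and order: "\<And>a b. a < length p \<Longrightarrow> b < length p \<Longrightarrow> w (is ! a) < w (is ! b) \<longleftrightarrow> p ! a < p ! b"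
    by blast
  show "contains n w p" unfolding contains_def
  proof (intro exI[of _ "\<lambda>a. is ! (a - 1)"] conjI allI impI)
    fix a b :: nat
    assume "1 \<le> a" "a < b" "b \<le> length p"
    then show "is ! (a - 1) < is ! (b - 1)" using sorted len by (simp add: sorted_wrt_iff_nth_less)
  next
    fix a :: nat
    assume "1 \<le> a" "a \<le> length p"
    then have "is ! (a - 1) \<in> set is" using len by simp
    then show "1 \<le> is ! (a - 1)" "is ! (a - 1) \<le> n" using range by auto
  next
    fix a b :: nat
    assume "1 \<le> a" "a \<le> length p" "1 \<le> b" "b \<le> length p"
    then show "w (is ! (a - 1)) < w (is ! (b - 1)) \<longleftrightarrow> p ! (a - 1) < p ! (b - 1)" by (simp add: order)
  qed
qed

lemma contains_312_iff:
  "contains n w [3,1,2] \<longleftrightarrow> (\<exists>a b c. 1 \<le> a \<and> a < b \<and> b < c \<and> c \<le> n \<and> w b < w c \<and> w c < w a)"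
  (is "_ \<longleftrightarrow> ?occurs")
proof
  assume "contains n w [3,1,2]"
  then obtain a b c where "sorted_wrt (<) [a,b,c]" "set [a,b,c] \<subseteq> {1..n}" "w b < w c" "w c < w a"
    unfolding contains_iff_indices by (auto simp: length_Suc_conv All_less_Suc numeral_eq_Suc)
  then show ?occurs by auto
next
  assume ?occurs
  then obtain a b c where "1 \<le> a" "a < b" "b < c" "c \<le> n" "w b < w c" "w c < w a" by blast
  then show "contains n w [3,1,2]" unfolding contains_iff_indices
    by (intro exI[of _ "[a,b,c]"]) (auto simp: All_less_Suc numeral_eq_Suc)
qed

lemma contains_1432_iff:
  "contains n w [1,4,3,2] \<longleftrightarrow>
    (\<exists>a b c d. 1 \<le> a \<and> a < b \<and> b < c \<and> c < d \<and> d \<le> n \<and> w a < w d \<and> w d < w c \<and> w c < w b)"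
  (is "_ \<longleftrightarrow> ?occurs")
proof
  assume "contains n w [1,4,3,2]"
  then obtain a b c d where "sorted_wrt (<) [a,b,c,d]" "set [a,b,c,d] \<subseteq> {1..n}"
      "w a < w d" "w d < w c" "w c < w b"
    unfolding contains_iff_indices by (auto simp: length_Suc_conv All_less_Suc numeral_eq_Suc)
  then show ?occurs by auto
next
  assume ?occurs
  then obtain a b c d where "1 \<le> a" "a < b" "b < c" "c < d" "d \<le> n"
      "w a < w d" "w d < w c" "w c < w b" by blast
  then show "contains n w [1,4,3,2]" unfolding contains_iff_indices
    by (intro exI[of _ "[a,b,c,d]"]) (auto simp: All_less_Suc numeral_eq_Suc)
qed

definition between_after :: "nat \<Rightarrow> (nat \<Rightarrow> nat) \<Rightarrow> nat \<Rightarrow> nat set" where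
  "between_after n w i = {j. Suc i < j \<and> j \<le> n \<and>
     (w i < w j \<and> w j < w (Suc i) \<or> w (Suc i) < w j \<and> w j < w i)}"

lemma finite_between_after [simp]: "finite (between_after n w i)"
  by (rule finite_subset[of _ "{..n}"]) (auto simp: between_after_def)

lemma card_below_split:
  fixes f :: "nat \<Rightarrow> nat"
  assumes "finite S" "x \<le> y"
  shows "card {j\<in>S. f j < y} = card {j\<in>S. f j < x} + card {j\<in>S. x \<le> f j \<and> f j < y}"
proof -
  have "{j\<in>S. f j < y} = {j\<in>S. f j < x} \<union> {j\<in>S. x \<le> f j \<and> f j < y}"
    using assms(2) by auto
  also have "card \<dots> = card {j\<in>S. f j < x} + card {j\<in>S. x \<le> f j \<and> f j < y}"
    by (rule card_Un_disjoint) (use assms(1) in auto)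
  finally show ?thesis .
qed

lemma lehmer_step:
  assumes "inj w" "i < n"
  shows "int (lehmer n w i) - int (lehmer n w (Suc i)) =
    (if w (Suc i) < w i then int (card (between_after n w i)) + 1
     else - int (card (between_after n w i)))"
proof -
  define S where "S = {Suc i<..n}"
  have fin: "finite S" by (simp add: S_def)
  have "{j. i < j \<and> j \<le> n \<and> w j < w i} =
      (if w (Suc i) < w i then insert (Suc i) else id) {j\<in>S. w j < w i}"
    using assms(2) by (auto simp: S_def intro: Suc_lessI)
  then have Li: "lehmer n w i = card {j\<in>S. w j < w i} + (if w (Suc i) < w i then 1 else 0)"
    using fin by (simp add: lehmer_def S_def)
  have Lsuc: "lehmer n w (Suc i) = card {j\<in>S. w j < w (Suc i)}"
    unfolding lehmer_def S_def by (rule arg_cong[where f = card]) auto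
  have "w i \<noteq> w (Suc i)" using assms(1) by (simp add: inj_eq)
  then consider (descent) "w (Suc i) < w i" | (ascent) "w i < w (Suc i)" by linarith
  then show ?thesis
  proof cases
    case descent
    have "between_after n w i = {j\<in>S. w (Suc i) \<le> w j \<and> w j < w i}"
      using descent assms(1) by (auto simp: between_after_def S_def le_less inj_eq)
    then show ?thesis
      using Li Lsuc descent card_below_split[OF fin, of "w (Suc i)" "w i" w] by simp
  next
    case ascent
    have "between_after n w i = {j\<in>S. w i \<le> w j \<and> w j < w (Suc i)}"
      using ascent assms(1) by (auto simp: between_after_def S_def le_less inj_eq)
    then show ?thesis
      using Li Lsuc ascent card_below_split[OF fin, of "w i" "w (Suc i)" w] by simp
  qed
qed

lemma lehmer_diff_le_1_iff:
  assumes "inj w" "i < n"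
  shows "int (lehmer n w i) - int (lehmer n w (Suc i)) \<le> 1 \<longleftrightarrow>
    (w (Suc i) < w i \<longrightarrow> between_after n w i = {})"
  using lehmer_step[OF assms] inj_eq[OF assms(1), of i "Suc i"]
  by (cases "w (Suc i) < w i") (auto simp flip: card_0_eq)

lemma lehmer_diff_ge_neg_1_iff:
  assumes "inj w" "i < n"
  shows "int (lehmer n w i) - int (lehmer n w (Suc i)) \<ge> -1 \<longleftrightarrow>
    (w i < w (Suc i) \<longrightarrow> card (between_after n w i) \<le> 1)"
  using lehmer_step[OF assms] inj_eq[OF assms(1), of i "Suc i"]
  by (cases "w (Suc i) < w i") (auto simp flip: card_0_eq)

lemma lehmer_less_Suc_iff:
  assumes "inj w" "i < n"
  shows "lehmer n w i < lehmer n w (Suc i) \<longleftrightarrow> w i < w (Suc i) \<and> between_after n w i \<noteq> {}"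
  using lehmer_step[OF assms] inj_eq[OF assms(1), of i "Suc i"]
  by (cases "w (Suc i) < w i") (auto simp flip: card_0_eq)

lemma lehmer_Suc_less_iff:
  assumes "inj w" "i < n"
  shows "lehmer n w (Suc i) < lehmer n w i \<longleftrightarrow> w (Suc i) < w i"
  using lehmer_step[OF assms] inj_eq[OF assms(1), of i "Suc i"]
  by (cases "w (Suc i) < w i") (auto simp flip: card_0_eq)

lemma avoids_312_iff_descents_between_after_empty:
  assumes "inj w"
  shows "avoids n w [3,1,2] \<longleftrightarrow>
    (\<forall>i. 1 \<le> i \<and> i < n \<longrightarrow> (w (Suc i) < w i \<longrightarrow> between_after n w i = {}))"
  (is "_ \<longleftrightarrow> ?descents_empty")
proof
  assume "avoids n w [3,1,2]"
  then show ?descents_empty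
    unfolding avoids_def contains_312_iff between_after_def by (auto 0 4)
next
  assume no_between: ?descents_empty
  show "avoids n w [3,1,2]" unfolding avoids_def contains_312_iff
  proof
    assume "\<exists>a b c. 1 \<le> a \<and> a < b \<and> b < c \<and> c \<le> n \<and> w b < w c \<and> w c < w a"
    then obtain a b c where abc: "1 \<le> a" "a < b" "b < c" "c \<le> n" "w b < w c" "w c < w a" by blast
    then obtain k where k: "a \<le> k" "k < b" "w c < w k" "\<not> w c < w (Suc k)"
      using ex_Suc_crossing[of a b "\<lambda>k. w c < w k"] by auto
    have "w (Suc k) \<noteq> w c" using assms k abc by (auto simp: inj_eq)
    then have "c \<in> between_after n w k" using k abc by (auto simp: between_after_def)
    moreover have "w (Suc k) < w c" using \<open>w (Suc k) \<noteq> w c\<close> k by simp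
    ultimately show False using no_between k abc by fastforce
  qed
qed

lemma card_between_after_ascent_le_1:
  assumes "inj w" "avoids n w [3,1,2]" "avoids n w [1,4,3,2]" "1 \<le> i" "w i < w (Suc i)"
  shows "card (between_after n w i) \<le> 1"
proof (rule ccontr)
  assume "\<not> card (between_after n w i) \<le> 1"
  then obtain j1 j2 where "j1 \<in> between_after n w i" "j2 \<in> between_after n w i" "j1 < j2"
    by (auto simp: card_le_Suc0_iff_eq not_le) (metis linorder_neqE_nat)
  then have j: "Suc i < j1" "j1 < j2" "j2 \<le> n"
      "w i < w j1" "w j1 < w (Suc i)" "w i < w j2" "w j2 < w (Suc i)"
    using assms(5) by (auto simp: between_after_def)
  have "w j1 \<noteq> w j2" using assms(1) j by (auto simp: inj_eq)
  then consider "w j2 < w j1" | "w j1 < w j2" by linarith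
  then show False
  proof cases
    case 1
    then have "contains n w [1,4,3,2]"
      unfolding contains_1432_iff using assms(4) j
      by (intro exI[of _ i] exI[of _ "Suc i"] exI[of _ j1] exI[of _ j2]) auto
    then show False using assms(3) by (simp add: avoids_def)
  next
    case 2
    then have "contains n w [3,1,2]"
      unfolding contains_312_iff using j
      by (intro exI[of _ "Suc i"] exI[of _ j1] exI[of _ j2]) auto
    then show False using assms(2) by (simp add: avoids_def)
  qed
qed

lemma ascents_separated_by_descent:
  assumes "inj w" "avoids n w [3,1,2]" "avoids n w [1,4,3,2]" "1 \<le> i" "i < j"
    and "w i < w (Suc i)" "between_after n w i \<noteq> {}"
    and "w j < w (Suc j)" "between_after n w j \<noteq> {}"
  shows "\<exists>k. i < k \<and> k < j \<and> w (Suc k) < w k"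
proof (rule ccontr)
  assume no_descent: "\<nexists>k. i < k \<and> k < j \<and> w (Suc k) < w k"
  have ascending: "w k \<le> w (Suc k)" if "k \<in> {Suc i..j}" for k
  proof (cases "k = j")
    case False
    then have "i < k" "k < j" using that by auto
    then show ?thesis using no_descent not_le by blast
  qed (use assms(8) in simp)
  have above: "w (Suc i) \<le> w m" if "Suc i \<le> m" "m \<le> Suc j" for m
    by (rule lift_Suc_mono_le_ivl[where N = "{Suc i..j}" and f = w, OF ascending])
      (use that in auto)
  obtain c where c: "Suc i < c" "c \<le> n" "w i < w c" "w c < w (Suc i)"
    using assms(6,7) by (auto simp: between_after_def)
  obtain d where d: "Suc j < d" "d \<le> n" "w j < w d" "w d < w (Suc j)"
    using assms(8,9) by (auto simp: between_after_def)
  have "Suc j < c" using above[of c] c by (cases "c \<le> Suc j") auto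
  have "w (Suc i) \<le> w j" using above[of j] assms(5) by simp
  then have "c \<noteq> d" using c d by auto
  then consider "c < d" | "d < c" by linarith
  then show False
  proof cases
    case 1
    then have "contains n w [3,1,2]" unfolding contains_312_iff
      using \<open>Suc j < c\<close> \<open>w (Suc i) \<le> w j\<close> c d
      by (intro exI[of _ "Suc j"] exI[of _ c] exI[of _ d]) auto
    then show False using assms(2) by (simp add: avoids_def)
  next
    case 2
    then have "contains n w [1,4,3,2]" unfolding contains_1432_iff
      using \<open>Suc j < c\<close> \<open>w (Suc i) \<le> w j\<close> assms(4,5) c d
      by (intro exI[of _ i] exI[of _ "Suc j"] exI[of _ d] exI[of _ c]) auto
    then show False using assms(3) by (simp add: avoids_def)
  qed
qed

lemma no_1432_occurrence:
  assumes inj: "inj w"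
    and ascents_le_1: "\<And>i. 1 \<le> i \<Longrightarrow> i < n \<Longrightarrow> w i < w (Suc i) \<Longrightarrow> card (between_after n w i) \<le> 1"
    and separated: "\<And>i j. 1 \<le> i \<Longrightarrow> i < j \<Longrightarrow> j < n \<Longrightarrow>
        w i < w (Suc i) \<Longrightarrow> between_after n w i \<noteq> {} \<Longrightarrow>
        w j < w (Suc j) \<Longrightarrow> between_after n w j \<noteq> {} \<Longrightarrow>
        \<exists>k. i < k \<and> k < j \<and> w (Suc k) < w k"
  shows "\<not> (1 \<le> a \<and> a < b \<and> b < c \<and> c < d \<and> d \<le> n \<and> w a < w d \<and> w d < w c \<and> w c < w b)"
proof (induction "b - a" arbitrary: a b c rule: less_induct)
  case less
  show ?case
  proof
    assume occ: "1 \<le> a \<and> a < b \<and> b < c \<and> c < d \<and> d \<le> n \<and> w a < w d \<and> w d < w c \<and> w c < w b"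
    have inner: "w d < w m \<and> w m < w c" if "a < m" "m < b" for m
    proof -
      have "\<not> w m < w d" using less[where a = m and b = b and c = c] that occ by auto
      moreover have "\<not> w c < w m" using less[where a = a and b = m and c = c] that occ by auto
      moreover have "w m \<noteq> w d" "w m \<noteq> w c" using inj that occ by (auto simp: inj_eq)
      ultimately show ?thesis by auto
    qed
    have no_descent: "\<not> w (Suc k) < w k" if "a < k" "Suc k < b" for k
      using less[where a = a and b = k and c = "Suc k"] inner[of "Suc k"] that occ by auto
    have "w d < w (Suc a)" using inner[of "Suc a"] occ by (cases "Suc a = b") auto
    show False
    proof (cases "b = Suc a")
      case True
      then have "{d, c} \<subseteq> between_after n w a" using occ by (auto simp: between_after_def)
      then have "2 \<le> card (between_after n w a)"
        using card_mono[OF finite_between_after[of n w a], of "{d, c}"] occ by simp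
      then show False using ascents_le_1[of a] occ True by auto
    next
      case False
      define j where "j = b - 1"
      have j: "a < j" "Suc j = b" using False occ by (auto simp: j_def)
      have "d \<in> between_after n w a" "c \<in> between_after n w j"
        using occ j inner[of j] \<open>w d < w (Suc a)\<close> by (auto simp: between_after_def)
      then obtain k where "a < k" "k < j" "w (Suc k) < w k"
        using separated[of a j] occ j inner[of j] \<open>w d < w (Suc a)\<close> by fastforce
      then show False using no_descent j by auto
    qed
  qed
qed

lemma avoids_1432_312_iff:
  assumes "inj w"
  shows "avoids n w [1,4,3,2] \<and> avoids n w [3,1,2] \<longleftrightarrow>
    (\<forall>i. 1 \<le> i \<and> i < n \<longrightarrow> (w (Suc i) < w i \<longrightarrow> between_after n w i = {})) \<and>
    (\<forall>i. 1 \<le> i \<and> i < n \<longrightarrow> (w i < w (Suc i) \<longrightarrow> card (between_after n w i) \<le> 1)) \<and>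
    (\<forall>i j. 1 \<le> i \<and> i < j \<and> j < n \<and>
        (w i < w (Suc i) \<and> between_after n w i \<noteq> {}) \<and>
        (w j < w (Suc j) \<and> between_after n w j \<noteq> {}) \<longrightarrow>
      (\<exists>k. i < k \<and> k < j \<and> w (Suc k) < w k))"
  (is "_ \<longleftrightarrow> ?descents_empty \<and> ?ascents_le_1 \<and> ?separated")
proof
  assume avoids: "avoids n w [1,4,3,2] \<and> avoids n w [3,1,2]"
  have ?descents_empty
    using avoids avoids_312_iff_descents_between_after_empty[OF assms] by blast
  moreover have ?ascents_le_1
    using avoids card_between_after_ascent_le_1[OF assms] by blast
  moreover have ?separated
    using avoids ascents_separated_by_descent[OF assms] by blast
  ultimately show "?descents_empty \<and> ?ascents_le_1 \<and> ?separated" by blast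
next
  assume conditions: "?descents_empty \<and> ?ascents_le_1 \<and> ?separated"
  have "\<not> (1 \<le> a \<and> a < b \<and> b < c \<and> c < d \<and> d \<le> n \<and> w a < w d \<and> w d < w c \<and> w c < w b)"
    for a b c d
    by (rule no_1432_occurrence[OF assms]) (use conditions in blast)+
  then have "avoids n w [1,4,3,2]" unfolding avoids_def contains_1432_iff by blast
  moreover have "avoids n w [3,1,2]"
    using conditions avoids_312_iff_descents_between_after_empty[OF assms] by blast
  ultimately show "avoids n w [1,4,3,2] \<and> avoids n w [3,1,2]" ..
qed

theorem lemma11:
  fixes n :: nat and w :: "nat \<Rightarrow> nat"
  assumes "w permutes {1..n}"
  defines "L \<equiv> (\<lambda>i. int (lehmer n w i))"
  shows "(avoids n w [1,4,3,2] \<and> avoids n w [3,1,2]) \<longleftrightarrow>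
    ((\<forall>i. 1 \<le> i \<and> i < n \<longrightarrow> L i - L (i+1) \<le> 1) \<and>
     (\<forall>i. 1 \<le> i \<and> i < n \<longrightarrow> L i - L (i+1) \<ge> -1) \<and>
     (\<forall>i j. 1 \<le> i \<and> i < j \<and> j < n \<and> L i < L (i+1) \<and> L j < L (j+1) \<longrightarrow>
        (\<exists>k. i < k \<and> k < j \<and> L k > L (k+1))))"
proof -
  have inj: "inj w" using assms(1) by (rule permutes_inj)
  show ?thesis
    unfolding avoids_1432_312_iff[OF inj] L_def
    by (simp add: lehmer_diff_le_1_iff[OF inj] lehmer_diff_ge_neg_1_iff[OF inj]
        lehmer_less_Suc_iff[OF inj] lehmer_Suc_less_iff[OF inj] not_less cong: imp_cong conj_cong)
qed

end
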